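(* For every nonnegative integer $n$, $$\sum_{k=0}^{\infty}(-1)^k(4k+1)\,\frac{(-n)_k\,(-2n-\tfrac12)_k\,(\tfrac12)_k}{k!\,(n+\tfrac32)_k\,(2n+2)_k}=\left(\frac{2^2}{3^3}\right)^n\frac{(\tfrac32)_n^2}{(\tfrac43)_n(\tfrac23)_n}.$$ (The sum is finite, since $(-n)_k=0$ for $k>n$.)
   Context: $(a)_j=\Gamma(a+j)/\Gamma(a)=a(a+1)\cdots(a+j-1)$ denotes the rising factorial (Pochhammer symbol), with $(a)_0=1$. *)

theory Defs
  imports "HOL-Analysis.Analysis"
begin

end

theory Submission
  imports Defs
begin

(* The proof is a Wilf-Zeilberger (creative telescoping) argument.  Write F(n,k) for the
   summand, S(n) = sum_k F(n,k), and rho(n) = (2n+3)^2 / (3(3n+2)(3n+4)), which is the ratio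
   of consecutive values of the closed form.  We exhibit a certificate G(n,m) with

     F(n+1,0) - rho(n) F(n,0) = G(n,0),
     F(n+1,m+1) - rho(n) F(n,m+1) = G(n,m+1) - G(n,m),      G(n,n+2) = 0.

   G(n,m) = W(n,m) P(n,m) / D(n) for an explicit polynomial P and a hypergeometric base term
   W(n,m) containing the factor (-n-1)_m, which vanishes from m = n+2 on.  As F(n,k) = 0 for
   k > n, all sums are finite and telescoping yields S(n+1) = rho(n) S(n).  The closed form
   satisfies the same recurrence and both equal 1 at n = 0. *)

section \<open>Creative telescoping\<close>

lemma telescoping_recurrence:
  fixes f g h :: "nat \<Rightarrow> 'a::comm_ring"
  assumes start: "f 0 - r * g 0 = h 0"
      and step: "\<And>k. f (Suc k) - r * g (Suc k) = h (Suc k) - h k"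
      and vanish: "h N = 0"
  shows "(\<Sum>k\<le>N. f k) = r * (\<Sum>k\<le>N. g k)"
proof -
  have partial: "(\<Sum>k\<le>m. f k - r * g k) = h m" for m
    by (induction m) (simp_all add: start step)
  show ?thesis
    using partial[of N] vanish by (simp add: sum_subtractf sum_distrib_left)
qed

definition summand :: "nat \<Rightarrow> nat \<Rightarrow> real" where
  "summand n k = (-1::real) ^ k * (4 * real k + 1) *
     (pochhammer (- real n) k * pochhammer (- 2 * real n - 1/2) k * pochhammer (1/2) k) /
     (fact k * pochhammer (real n + 3/2) k * pochhammer (2 * real n + 2) k)"

definition closed_form :: "nat \<Rightarrow> real" where
  "closed_form n = (2^2 / 3^3) ^ n * (pochhammer (3/2) n)^2 / (pochhammer (4/3) n * pochhammer (2/3) n)"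

(* The ratio closed_form (n+1) / closed_form n, as a rational function of x = n. *)
definition ratio :: "real \<Rightarrow> real" where
  "ratio x = (2*x + 3)^2 / (3 * (3*x + 2) * (3*x + 4))"

lemma pochhammer_ne_zero_of_pos: "(a::real) > 0 \<Longrightarrow> pochhammer a k \<noteq> 0"
  using pochhammer_pos[of a k] by simp

(* The factor (-n)_k kills every term with k > n, so the series is a finite sum. *)
lemma summand_vanishes: "n < k \<Longrightarrow> summand n k = 0"
  unfolding summand_def by (simp add: pochhammer_of_nat_eq_0_lemma)

lemma suminf_summand: "n \<le> N \<Longrightarrow> (\<Sum>k. summand n k) = (\<Sum>k\<le>N. summand n k)"
  by (rule suminf_finite) (auto intro: summand_vanishes)

lemma closed_form_Suc: "closed_form (Suc n) = ratio (real n) * closed_form n"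
proof -
  have "pochhammer (4/3::real) n \<noteq> 0" "pochhammer (2/3::real) n \<noteq> 0"
    by (simp_all add: pochhammer_ne_zero_of_pos)
  then have "closed_form (Suc n)
      = 4/27 * (3/2 + real n)^2 / ((4/3 + real n) * (2/3 + real n)) * closed_form n"
    unfolding closed_form_def pochhammer_Suc by (simp add: power_mult_distrib ac_simps)
  also have "4/27 * (3/2 + real n)^2 / ((4/3 + real n) * (2/3 + real n)) = ratio (real n)"
  proof -
    have "(4/3 + real n) * (2/3 + real n) \<noteq> 0" "3 * (3 * real n + 2) * (3 * real n + 4) \<noteq> 0"
      by simp_all
    then show ?thesis unfolding ratio_def by (simp add: frac_eq_eq) algebra
  qed
  finally show ?thesis .
qed

section \<open>The certificate\<close>

(* Base term W(n,m); the factor (-n-1)_m makes it vanish for m \<ge> n + 2. *)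
definition base :: "nat \<Rightarrow> nat \<Rightarrow> real" where
  "base n m = (-1::real)^m * pochhammer (- real n - 1) m * pochhammer (-2 * real n - 5/2) m
     * pochhammer (1/2) m / (fact m * pochhammer (real n + 3/2) (m + 1) * pochhammer (2 * real n + 2) (m + 2))"

(* The term ratios W(n,m+1)/W(n,m) and F(n,m+1)/W(n,m), as rational functions of x = n, y = m. *)
definition base_ratio :: "real \<Rightarrow> real \<Rightarrow> real" where
  "base_ratio x y = - (y - x - 1) * (y - 2*x - 5/2) * (y + 1/2) / ((y + 1) * (x + y + 5/2) * (2*x + y + 4))"

definition same_ratio :: "real \<Rightarrow> real \<Rightarrow> real" where
  "same_ratio x y = (4*y + 5) * ((y - x - 1) * (y - 2*x - 5/2) * (y + 1/2))
     * ((y - x) * (y - 2*x - 3/2) * (y - 2*x - 1/2) * (2*x + y + 3))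
     / ((x + 1) * (2*x + 5/2) * (2*x + 3/2) * (y + 1))"

definition cert_poly :: "real \<Rightarrow> real \<Rightarrow> real" where
  "cert_poly x y =
       (4050 + 33480 * x + 117972 * x^2 + 232224 * x^3 + 280050 * x^4 + 212312 * x^5 + 98984 * x^6 + 25984 * x^7 + 2944 * x^8)
     + (405 + 13959 * x + 83466 * x^2 + 226104 * x^3 + 340896 * x^4 + 305760 * x^5 + 162720 * x^6 + 47552 * x^7 + 5888 * x^8) * y
     + (- 11880 - 88515 * x - 269670 * x^2 - 439688 * x^3 - 417136 * x^4 - 231376 * x^5 - 69728 * x^6 - 8832 * x^7) * y^2
     + (8073 + 41220 * x + 83616 * x^2 + 86688 * x^3 + 48432 * x^4 + 13760 * x^5 + 1536 * x^6) * y^3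
     + (1152 + 9528 * x + 22760 * x^2 + 23760 * x^3 + 11488 * x^4 + 2112 * x^5) * y^4
     + (- 1944 - 6192 * x - 6960 * x^2 - 3328 * x^3 - 576 * x^4) * y^5
     + (- 432 * x - 576 * x^2 - 192 * x^3) * y^6
     + (144 + 192 * x + 64 * x^2) * y^7"

definition cert_denom :: "real \<Rightarrow> real" where
  "cert_denom x = 6 * (x + 1) * (3*x + 2) * (3*x + 4) * (4*x + 3) * (4*x + 5)"

definition certificate :: "nat \<Rightarrow> nat \<Rightarrow> real" where
  "certificate n m = base n m * cert_poly (real n) (real m) / cert_denom (real n)"

(* The polynomial identity to which the telescoping relation reduces after clearing
   denominators; this is where the specific certificate polynomial is checked. *)
lemma certificate_polynomial_identity:
  fixes x y :: real
  defines "A \<equiv> (y - x - 1) * (y - 2*x - 5/2) * (y + 1/2)"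
      and "B \<equiv> (y + 1) * ((x + y + 5/2) * (2*x + y + 4))"
      and "C \<equiv> (y - x) * (y - 2*x - 3/2) * (y - 2*x - 1/2) * (2*x + y + 3)"
  shows "cert_poly x (y + 1) * A + cert_poly x y * B
       = (2*x + 3)^2 * (4*y + 5) * A * ((x + 1) * cert_denom x + 8 * C * ((x + y + 5/2) * (2*x + y + 4)))"
  unfolding A_def B_def C_def cert_poly_def cert_denom_def by algebra

(* The same identity in rational form, divided by W(n,m):  G(n,m+1) - G(n,m) on the left and
   F(n+1,m+1) - rho(n) F(n,m+1) on the right (cf. base_Suc, summand_Suc_eq_base, summand_Suc). *)
lemma certificate_rational_identity:
  fixes x y :: real
  assumes "0 \<le> x" "0 \<le> y"
  shows "cert_poly x (y + 1) / cert_denom x * base_ratio x y - cert_poly x y / cert_denom x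
       = (4*y + 5) * (x + 1) * (2*x + 3)^2 * base_ratio x y - ratio x * same_ratio x y"
proof -
  define A where "A = (y - x - 1) * (y - 2*x - 5/2) * (y + 1/2)"
  define C where "C = (y - x) * (y - 2*x - 3/2) * (y - 2*x - 1/2) * (2*x + y + 3)"
  define D where "D = cert_denom x"
  define E where "E = (x + y + 5/2) * (2*x + y + 4)"
  define B where "B = (y + 1) * E"
  have nonzero: "D \<noteq> 0" "B \<noteq> 0"
    using assms by (simp_all add: D_def cert_denom_def B_def E_def)
  have base_ratio_AB: "base_ratio x y = - A / B"
    unfolding base_ratio_def A_def B_def E_def by (simp only: mult_minus_left minus_divide_left mult.assoc)
  have same: "ratio x * same_ratio x y = (2*x + 3)^2 * (4*y + 5) * A * (8 * C * E) / (B * D)"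
  proof -
    have "ratio x * same_ratio x y = (2*x + 3)^2 * ((4*y + 5) * A * C)
        / (3 * (3*x + 2) * (3*x + 4) * ((x + 1) * (2*x + 5/2) * (2*x + 3/2) * (y + 1)))"
      unfolding ratio_def same_ratio_def A_def C_def times_divide_times_eq ..
    also have "\<dots> = (2*x + 3)^2 * (4*y + 5) * A * (8 * C * E) / (B * D)"
    proof (rule frac_eq_eq[THEN iffD2])
      show "3 * (3*x + 2) * (3*x + 4) * ((x + 1) * (2*x + 5/2) * (2*x + 3/2) * (y + 1)) \<noteq> 0"
        using assms by simp
      show "B * D \<noteq> 0" using nonzero by simp
      show "(2*x + 3)^2 * ((4*y + 5) * A * C) * (B * D) = (2*x + 3)^2 * (4*y + 5) * A * (8 * C * E)
          * (3 * (3*x + 2) * (3*x + 4) * ((x + 1) * (2*x + 5/2) * (2*x + 3/2) * (y + 1)))"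
        unfolding B_def D_def cert_denom_def by algebra
    qed
    finally show ?thesis .
  qed
  have "cert_poly x (y + 1) / D * base_ratio x y - cert_poly x y / D
      = - (cert_poly x (y + 1) * A + cert_poly x y * B) / (B * D)"
    using nonzero unfolding base_ratio_AB by (simp add: field_simps)
  also have "\<dots> = - ((2*x + 3)^2 * (4*y + 5) * A * ((x + 1) * D + 8 * C * E)) / (B * D)"
    unfolding A_def B_def E_def C_def D_def certificate_polynomial_identity ..
  also have "\<dots> = (4*y + 5) * (x + 1) * (2*x + 3)^2 * base_ratio x y - ratio x * same_ratio x y"
    using nonzero unfolding base_ratio_AB same by (simp add: field_simps)
  finally show ?thesis unfolding D_def .
qed

section \<open>Hypergeometric shift relations\<close>

lemma base_Suc: "base n (Suc m) = base n m * base_ratio (real n) (real m)"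
proof -
  define x y where "x = real n" and "y = real m"
  have "0 \<le> x" "0 \<le> y" by (simp_all add: x_def y_def)
  have expand:
    "pochhammer (-x - 1) (Suc m) = pochhammer (-x - 1) m * (y - x - 1)"
    "pochhammer (-2*x - 5/2) (Suc m) = pochhammer (-2*x - 5/2) m * (y - 2*x - 5/2)"
    "pochhammer (1/2) (Suc m) = pochhammer (1/2) m * (y + 1/2)"
    "pochhammer (x + 3/2) (Suc m + 1) = pochhammer (x + 3/2) (m + 1) * (x + y + 5/2)"
    "pochhammer (2*x + 2) (Suc m + 2) = pochhammer (2*x + 2) (m + 2) * (2*x + y + 4)"
    "fact (Suc m) = fact m * (y + 1)"
    by (simp_all add: pochhammer_Suc y_def)
  have nonzero: "fact m \<noteq> (0::real)" "pochhammer (x + 3/2) (m + 1) \<noteq> 0" "pochhammer (2*x + 2) (m + 2) \<noteq> 0"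
    "y + 1 \<noteq> 0" "x + y + 5/2 \<noteq> 0" "2*x + y + 4 \<noteq> 0"
    using \<open>0 \<le> x\<close> \<open>0 \<le> y\<close> by (auto intro!: pochhammer_ne_zero_of_pos)
  show ?thesis
    unfolding base_def base_ratio_def x_def[symmetric] y_def[symmetric] expand
    using nonzero by (simp add: field_simps)
qed

(* Raising n by one shifts the lower parameters n + 3/2 and 2n + 2 by one resp. two steps, and
   W(n,k) anticipates exactly these shifts: F(n+1,k) = (4k+1)(n+1)(2n+3)^2 W(n,k). *)
lemma summand_Suc_eq_base:
  "summand (Suc n) k = (4 * real k + 1) * (real n + 1) * (2 * real n + 3)^2 * base n k"
proof -
  define x where "x = real n"
  have "0 \<le> x" by (simp add: x_def)
  define T where "T = (-1)^k * pochhammer (-x - 1) k * pochhammer (-2*x - 5/2) k * pochhammer (1/2) k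
    / (fact k * pochhammer (x + 5/2) k * pochhammer (2*x + 4) k)"
  have args: "- real (Suc n) = -x - 1" "- 2 * real (Suc n) - 1/2 = -2*x - 5/2"
    "real (Suc n) + 3/2 = x + 5/2" "2 * real (Suc n) + 2 = 2*x + 4"
    by (simp_all add: x_def)
  have summand_T: "summand (Suc n) k = (4 * real k + 1) * T"
    unfolding summand_def T_def args by (simp add: ac_simps)
  have base_T: "base n k * ((x + 3/2) * ((2*x + 2) * (2*x + 3))) = T"
  proof -
    have lower: "pochhammer (x + 3/2) (k + 1) = (x + 3/2) * pochhammer (x + 5/2) k"
      "pochhammer (2*x + 2) (k + 2) = ((2*x + 2) * (2*x + 3)) * pochhammer (2*x + 4) k"
      by (simp_all add: pochhammer_rec numeral_2_eq_2 ac_simps)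
    have cancel: "a / (f * (c * p) * (d * q)) * (c * d) = a / (f * p * q)"
      if "c \<noteq> 0" "d \<noteq> 0" for a f p q c d :: real
      using that by simp
    show ?thesis
      unfolding base_def T_def x_def[symmetric] lower using \<open>0 \<le> x\<close> by (intro cancel) simp_all
  qed
  have "summand (Suc n) k = (4 * real k + 1) * (base n k * ((x + 3/2) * ((2*x + 2) * (2*x + 3))))"
    unfolding summand_T base_T ..
  also have "\<dots> = (4 * real k + 1) * (real n + 1) * (2 * real n + 3)^2 * base n k"
    by (simp add: x_def power2_eq_square algebra_simps)
  finally show ?thesis .
qed

(* Each rising factorial of F(n,m+1) differs from the corresponding one of W(n,m) by a few
   explicit linear factors; the identity is then a polynomial consequence of these relations. *)
lemma summand_Suc: "summand n (Suc m) = base n m * same_ratio (real n) (real m)"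
proof -
  define x y where "x = real n" and "y = real m"
  have "0 \<le> x" "0 \<le> y" by (simp_all add: x_def y_def)
  have "(-x - 1) * pochhammer (-x) (Suc m) = pochhammer (-x - 1) (Suc (Suc m))"
    by (simp add: pochhammer_rec)
  also have "\<dots> = pochhammer (-x - 1) m * (y - x - 1) * (y - x)"
    by (simp add: pochhammer_Suc y_def algebra_simps)
  finally have upper1: "(-x - 1) * pochhammer (-x) (Suc m) = pochhammer (-x - 1) m * (y - x - 1) * (y - x)" .
  have "(2*x + 5/2) * (2*x + 3/2) * pochhammer (-2*x - 1/2) (Suc m)
      = pochhammer (-2*x - 5/2) 2 * pochhammer (-2*x - 5/2 + of_nat 2) (Suc m)"
    by (simp add: pochhammer_Suc numeral_2_eq_2 algebra_simps)
  also have "\<dots> = pochhammer (-2*x - 5/2) (2 + Suc m)"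
    by (rule pochhammer_product'[symmetric])
  also have "\<dots> = pochhammer (-2*x - 5/2) m * (y - 2*x - 5/2) * (y - 2*x - 3/2) * (y - 2*x - 1/2)"
    by (simp add: pochhammer_Suc y_def algebra_simps)
  finally have upper2: "(2*x + 5/2) * (2*x + 3/2) * pochhammer (-2*x - 1/2) (Suc m)
      = pochhammer (-2*x - 5/2) m * (y - 2*x - 5/2) * (y - 2*x - 3/2) * (y - 2*x - 1/2)" .
  have lower: "pochhammer (2*x + 2) (Suc m) * (2*x + y + 3) = pochhammer (2*x + 2) (m + 2)"
    by (simp add: pochhammer_Suc[of _ "Suc m"] y_def algebra_simps)
  have expand: "pochhammer (1/2) (Suc m) = pochhammer (1/2) m * (y + 1/2)" "fact (Suc m) = fact m * (y + 1)"
    "(-1::real) ^ Suc m = - ((-1) ^ m)" "real (Suc m) = y + 1"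
    "pochhammer (x + 3/2) (Suc m) = pochhammer (x + 3/2) (m + 1)"
    by (simp_all add: pochhammer_Suc y_def)
  have nonzero: "fact m \<noteq> (0::real)" "pochhammer (x + 3/2) (m + 1) \<noteq> 0" "pochhammer (2*x + 2) (m + 2) \<noteq> 0"
    "pochhammer (2*x + 2) (Suc m) \<noteq> 0" "(x + 1) * (2*x + 5/2) * (2*x + 3/2) * (y + 1) \<noteq> 0"
    using \<open>0 \<le> x\<close> \<open>0 \<le> y\<close> by (auto intro!: pochhammer_ne_zero_of_pos)
  (* The sign (-1)^m is abstracted so that the ring normaliser treats it as an atom. *)
  define sign where "sign = (-1::real) ^ m"
  show ?thesis
    unfolding summand_def base_def same_ratio_def x_def[symmetric] y_def[symmetric] times_divide_times_eq
    apply (rule frac_eq_eq[THEN iffD2])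
    subgoal using nonzero by simp
    subgoal using nonzero by simp
    subgoal unfolding expand lower[symmetric] sign_def[symmetric] using upper1 upper2 by algebra
    done
qed

section \<open>The telescoping relation and the recurrence for the sum\<close>

lemma cert_poly_at_zero:
  "cert_poly x 0 = 2 * (2*x + 3)^2 * (x + 1)^2 * (4*x + 3) * (4*x + 5) * (23 * x^2 + 42 * x + 15)"
  by (simp add: cert_poly_def, algebra)

(* The first two telescoping equations; F(n,0) = 1, so the first reads G(n,0) = 1 - rho(n). *)
lemma certificate_0: "certificate n 0 = summand (Suc n) 0 - ratio (real n) * summand n 0"
proof -
  define x where "x = real n"
  have "0 \<le> x" by (simp add: x_def)
  have "certificate n 0 = cert_poly x 0 / ((x + 3/2) * ((2*x + 2) * (2*x + 3)) * cert_denom x)"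
    by (simp add: certificate_def base_def x_def pochhammer_Suc numeral_2_eq_2 algebra_simps)
  also have "\<dots> = (3 * (3*x + 2) * (3*x + 4) - (2*x + 3)^2) / (3 * (3*x + 2) * (3*x + 4))"
  proof (rule frac_eq_eq[THEN iffD2])
    show "(x + 3/2) * ((2*x + 2) * (2*x + 3)) * cert_denom x \<noteq> 0" "3 * (3*x + 2) * (3*x + 4) \<noteq> 0"
      using \<open>0 \<le> x\<close> by (simp_all add: cert_denom_def)
    show "cert_poly x 0 * (3 * (3*x + 2) * (3*x + 4))
        = (3 * (3*x + 2) * (3*x + 4) - (2*x + 3)^2) * ((x + 3/2) * ((2*x + 2) * (2*x + 3)) * cert_denom x)"
      unfolding cert_poly_at_zero cert_denom_def by algebra
  qed
  also have "\<dots> = 1 - ratio x"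
    using \<open>0 \<le> x\<close> by (simp add: ratio_def diff_divide_distrib)
  finally show ?thesis
    by (simp add: summand_def x_def)
qed

lemma certificate_Suc:
  "certificate n (Suc m) - certificate n m = summand (Suc n) (Suc m) - ratio (real n) * summand n (Suc m)"
proof -
  define x y where "x = real n" and "y = real m"
  have "certificate n (Suc m) - certificate n m
      = base n m * (cert_poly x (y + 1) / cert_denom x * base_ratio x y - cert_poly x y / cert_denom x)"
    unfolding certificate_def base_Suc by (simp add: x_def y_def algebra_simps)
  also have "\<dots> = base n m * ((4*y + 5) * (x + 1) * (2*x + 3)^2 * base_ratio x y - ratio x * same_ratio x y)"
    using certificate_rational_identity[of x y] by (simp add: x_def y_def)
  also have "\<dots> = summand (Suc n) (Suc m) - ratio (real n) * summand n (Suc m)"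
    unfolding summand_Suc_eq_base[of n "Suc m"]
    unfolding base_Suc summand_Suc x_def y_def of_nat_Suc by algebra
  finally show ?thesis .
qed

(* The factor (-n-1)_{n+2} of W(n,n+2) vanishes. *)
lemma certificate_vanishes: "certificate n (n + 2) = 0"
proof -
  have "- real n - 1 = - real (Suc n)" by simp
  then have "pochhammer (- real n - 1) (n + 2) = 0"
    by (simp only: pochhammer_of_nat_eq_0_lemma)
  then show ?thesis by (simp add: certificate_def base_def)
qed

lemma summand_sum_recurrence: "(\<Sum>k. summand (Suc n) k) = ratio (real n) * (\<Sum>k. summand n k)"
proof -
  have "(\<Sum>k\<le>n + 2. summand (Suc n) k) = ratio (real n) * (\<Sum>k\<le>n + 2. summand n k)"
    by (rule telescoping_recurrence[OF certificate_0[symmetric] certificate_Suc[symmetric] certificate_vanishes])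
  then show ?thesis
    using suminf_summand[of "Suc n" "n + 2"] suminf_summand[of n "n + 2"] by simp
qed

theorem theorem2:
  fixes n :: nat
  shows "(\<Sum>k. (-1::real) ^ k * (4 * real k + 1) *
            (pochhammer (- real n) k * pochhammer (- 2 * real n - 1/2) k * pochhammer (1/2) k) /
            (fact k * pochhammer (real n + 3/2) k * pochhammer (2 * real n + 2) k))
         = (2^2 / 3^3) ^ n * (pochhammer (3/2) n)^2 / (pochhammer (4/3) n * pochhammer (2/3) n)"
proof -
  have "(\<Sum>k. summand n k) = closed_form n"
  proof (induction n)
    case 0
    have "(\<Sum>k. summand 0 k) = summand 0 0" using suminf_summand[of 0 0] by simp
    then show ?case by (simp add: summand_def closed_form_def)
  next
    case (Suc n)
    then show ?case by (simp add: summand_sum_recurrence closed_form_Suc)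
  qed
  then show ?thesis unfolding summand_def closed_form_def .
qed

end
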